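(* Let $f=f(u,v)$ be a generalized timelike minimal surface with real Weierstrass data $(g_1,g_2,\hat{\omega}_1du,\hat{\omega}_2dv)$ and let $p=(0,0)$ be a non-degenerate singular point with $\operatorname{rank}(df_p)=1$ and $\hat\omega_2(p)=0$ at which $f$ is not a front. Put \[ a=\frac{(\hat{\omega}_2)_v}{\hat{\omega}_1}\left(\frac{g_1+g_2}{1+g_1^2}\right)^2(p),\qquad b=\frac{(\hat{\omega}_2)_{vv}}{2\hat{\omega}_1}\left(\frac{g_1+g_2}{1+g_1^2}\right)^2(p), \] $\tilde\eta=(av+bv^2)\partial_u+\partial_v$, $\xi=\partial_u$, and $C=\dfrac{(\hat{\omega}_2)_{vv}}{(\hat{\omega}_2)_v}(p)$. Then $\tilde\eta$ is a null vector field along the singular curve $v=0$ (i.e.\ $df(\tilde\eta)=0$ there), \[ \langle \xi f,\tilde\eta^2f\rangle_E(p)=\langle \xi f,\tilde\eta^3f\rangle_E(p)=0,\qquad \tilde\eta^3f(p)=C\,\tilde\eta^2f(p). \]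
   Context: $\mathbb{L}^3$ is $\mathbb{R}^3$ with the Lorentzian metric $\langle\,,\rangle=-dt^2+dx^2+dy^2$; $\langle\,,\rangle_E$ is the Euclidean inner product of $\mathbb{R}^3$. A generalized timelike minimal surface is a non-constant smooth map $f\colon\Sigma\to\mathbb{L}^3$ from a 2-manifold which is an immersion on an open dense subset and such that near each point there are local coordinates $(u,v)$ with $\langle f_u,f_u\rangle=\langle f_v,f_v\rangle=0$ and $f_{uv}=0$. In such coordinates $f(u,v)=\tfrac12\int_{u_0}^u(-1-g_1^2,1-g_1^2,2g_1)\hat{\omega}_1du+\tfrac12\int_{v_0}^v(1+g_2^2,1-g_2^2,-2g_2)\hat{\omega}_2dv+f(u_0,v_0)$, with $g_1,\hat\omega_1$ functions of $u$ and $g_2,\hat\omega_2$ functions of $v$ (real Weierstrass data). Standing assumption: $g_1,g_2$ take finite real values at every singular point. Such $f$ is a frontal with unit normal $n=(g_1+g_2,-g_1+g_2,1+g_1g_2)/\sqrt{(1-g_1g_2)^2+2(g_1+g_2)^2}$; $f$ is a front at $p$ if $(f,n)$ is an immersion at $p$. With $\lambda=\det(f_u,f_v,n)$, a singular point is non-degenerate if $d\lambda_p\neq0$. For a vector field $\tilde\eta$, $\tilde\eta^kf$ is the $k$-fold directional derivative $\tilde\eta\cdots\tilde\eta f$. *)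

theory Defs
  imports "HOL-Analysis.Analysis"
begin

definition smooth_on :: "real set \<Rightarrow> (real \<Rightarrow> real) \<Rightarrow> bool" where
  "smooth_on S g \<longleftrightarrow> (\<forall>k. \<forall>x\<in>S. ((deriv ^^ k) g) field_differentiable (at x))"

definition pd_u :: "(real \<times> real \<Rightarrow> 'a::real_normed_vector) \<Rightarrow> real \<times> real \<Rightarrow> 'a" where
  "pd_u h = (\<lambda>(u, v). vector_derivative (\<lambda>s. h (s, v)) (at u))"

definition pd_v :: "(real \<times> real \<Rightarrow> 'a::real_normed_vector) \<Rightarrow> real \<times> real \<Rightarrow> 'a" where
  "pd_v h = (\<lambda>(u, v). vector_derivative (\<lambda>t. h (u, t)) (at v))"

definition vf_apply :: "(real \<times> real \<Rightarrow> real \<times> real) \<Rightarrow> (real \<times> real \<Rightarrow> 'a::real_normed_vector)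
    \<Rightarrow> real \<times> real \<Rightarrow> 'a" where
  "vf_apply X h = (\<lambda>p. fst (X p) *\<^sub>R pd_u h p + snd (X p) *\<^sub>R pd_v h p)"

definition det3 :: "real^3 \<Rightarrow> real^3 \<Rightarrow> real^3 \<Rightarrow> real" where
  "det3 x y z = det (vector [x, y, z] :: real^3^3)"

definition tm_normal :: "(real \<Rightarrow> real) \<Rightarrow> (real \<Rightarrow> real) \<Rightarrow> real \<times> real \<Rightarrow> real^3" where
  "tm_normal g1 g2 = (\<lambda>(u, v).
     (1 / sqrt ((1 - g1 u * g2 v)\<^sup>2 + 2 * (g1 u + g2 v)\<^sup>2)) *\<^sub>R
       vector [g1 u + g2 v, - g1 u + g2 v, 1 + g1 u * g2 v])"

text \<open>(f,n) is an immersion at p: its differential (columns (f_u,n_u), (f_v,n_v)) is injective.\<close>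
definition is_front_at :: "(real \<times> real \<Rightarrow> real^3) \<Rightarrow> (real \<times> real \<Rightarrow> real^3) \<Rightarrow> real \<times> real \<Rightarrow> bool" where
  "is_front_at f n p \<longleftrightarrow>
     (\<forall>\<alpha> \<beta>. \<alpha> *\<^sub>R pd_u f p + \<beta> *\<^sub>R pd_v f p = 0 \<and> \<alpha> *\<^sub>R pd_u n p + \<beta> *\<^sub>R pd_v n p = 0
        \<longrightarrow> \<alpha> = 0 \<and> \<beta> = 0)"

end

theory Submission
  imports Defs
begin

(* Since f(u,v) = F1 u + F2 v with f_u = X u = (w1/2) N1(g1 u) and f_v = Y v = (w2/2) N2(g2 v),
   the field eta = phi(v) d/du + d/dv, phi(v) = a v + b v^2, gives eta f = phi X + Y, and at p,
   where phi vanishes, eta^2 f(p) = a X(0) + Y'(0) and eta^3 f(p) = 2b X(0) + Y''(0).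
   The hypotheses at p pin down the data: w2(0) = 0 is given, rank one gives w1(0) <> 0, failure
   of the front condition makes the normal stationary along d/dv, which forces g2'(0) = 0, and
   non-degeneracy forces w2'(0) <> 0, because lambda(0,v) = w2(v) times a continuous function.
   Hence Y'(0) = (w2'(0)/2) N2(g2 0) and Y''(0) = (w2''(0)/2) N2(g2 0), and the claims reduce to
   <N1 g, N1 g>_E = 2 (1 + g^2)^2 and <N1 g, N2 h>_E = -2 (g + h)^2: the coefficients a and b are
   exactly those making eta^2 f(p) and eta^3 f(p) Euclidean-orthogonal to f_u(p), and C is the
   common ratio w2''(0)/w2'(0). *)

lemma vector3_eq_basis_sum:
  "(vector [a, b, c] :: real^3) = a *\<^sub>R vector [1, 0, 0] + b *\<^sub>R vector [0, 1, 0] + c *\<^sub>R vector [0, 0, 1]"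
  by (auto simp: vec_eq_iff forall_3)

lemma has_vector_derivative_vector3:
  assumes "(p1 has_real_derivative d1) (at t)" "(p2 has_real_derivative d2) (at t)"
    "(p3 has_real_derivative d3) (at t)"
  shows "((\<lambda>t. vector [p1 t, p2 t, p3 t] :: real^3) has_vector_derivative vector [d1, d2, d3]) (at t)"
proof -
  have "((\<lambda>t. p1 t *\<^sub>R vector [1, 0, 0] + p2 t *\<^sub>R vector [0, 1, 0] + p3 t *\<^sub>R vector [0, 0, 1] :: real^3)
      has_vector_derivative d1 *\<^sub>R vector [1, 0, 0] + d2 *\<^sub>R vector [0, 1, 0] + d3 *\<^sub>R vector [0, 0, 1]) (at t)"
    using assms by (auto intro!: derivative_eq_intros)
  then show ?thesis by (simp only: vector3_eq_basis_sum[symmetric])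
qed

lemma isCont_vector3 [continuous_intros]:
  assumes "isCont p1 t" "isCont p2 t" "isCont p3 t"
  shows "isCont (\<lambda>t. vector [p1 t, p2 t, p3 t] :: real^3) t"
proof -
  have "isCont (\<lambda>t. p1 t *\<^sub>R vector [1, 0, 0] + p2 t *\<^sub>R vector [0, 1, 0] + p3 t *\<^sub>R vector [0, 0, 1] :: real^3) t"
    using assms by (intro continuous_intros)
  then show ?thesis by (simp only: vector3_eq_basis_sum[symmetric])
qed

lemma det3_scaleR_middle: "det3 x (c *\<^sub>R y) z = c * det3 x y z"
  by (simp add: det3_def det_3 algebra_simps)

lemma isCont_det3:
  "isCont x t \<Longrightarrow> isCont y t \<Longrightarrow> isCont z t \<Longrightarrow> isCont (\<lambda>s. det3 (x s) (y s) (z s)) t"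
  unfolding det3_def det_3 vector_3 by (intro continuous_intros isCont_vec_nth)

lemma has_real_derivative_mult_vanishing:
  assumes "(w has_real_derivative w') (at x)" "w x = 0" "isCont D x"
  shows "((\<lambda>t. w t * D t) has_real_derivative w' * D x) (at x)"
proof -
  obtain c where c: "\<And>z. w z - w x = c z * (z - x)" "isCont c x" "c x = w'"
    using assms(1) unfolding CARAT_DERIV by blast
  show ?thesis
    unfolding CARAT_DERIV
  proof (intro exI conjI allI)
    show "w z * D z - w x * D x = c z * D z * (z - x)" for z
      using c(1)[of z] assms(2) by simp
  qed (use c assms(3) in \<open>auto intro: continuous_intros\<close>)
qed

lemma smooth_on_has_real_derivative:
  "smooth_on S g \<Longrightarrow> x \<in> S \<Longrightarrow> ((deriv ^^ k) g has_real_derivative (deriv ^^ Suc k) g x) (at x)"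
  unfolding smooth_on_def by (simp add: DERIV_deriv_iff_field_differentiable)

lemma scaleR_comp_second_derivative:
  fixes N :: "real \<Rightarrow> 'a::real_normed_vector"
  assumes "v0 \<in> I"
    and w: "\<And>t. t \<in> I \<Longrightarrow> (w has_real_derivative w' t) (at t)"
    and w': "(w' has_real_derivative w'') (at v0)"
    and g: "\<And>t. t \<in> I \<Longrightarrow> (g has_real_derivative g' t) (at t)"
    and g': "(g' has_real_derivative g'') (at v0)"
    and N: "\<And>x. (N has_vector_derivative N' x) (at x)"
    and N': "N' differentiable (at (g v0))"
    and "w v0 = 0" "g' v0 = 0"
  shows "\<And>t. t \<in> I \<Longrightarrow>
           ((\<lambda>v. w v *\<^sub>R N (g v)) has_vector_derivative w' t *\<^sub>R N (g t) + (w t * g' t) *\<^sub>R N' (g t)) (at t)"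
    and "((\<lambda>t. w' t *\<^sub>R N (g t) + (w t * g' t) *\<^sub>R N' (g t)) has_vector_derivative w'' *\<^sub>R N (g v0)) (at v0)"
proof -
  have Ng: "((\<lambda>v. N (g v)) has_vector_derivative g' t *\<^sub>R N' (g t)) (at t)" if "t \<in> I" for t
    using vector_diff_chain_at[of g "g' t" t N] g[OF that] N
    by (simp add: o_def has_real_derivative_iff_has_vector_derivative)
  show "((\<lambda>v. w v *\<^sub>R N (g v)) has_vector_derivative w' t *\<^sub>R N (g t) + (w t * g' t) *\<^sub>R N' (g t)) (at t)"
    if "t \<in> I" for t
    using w[OF that] Ng[OF that] by (auto intro!: derivative_eq_intros)
  obtain N'' where N'': "(N' has_vector_derivative N'') (at (g v0))"
    using N' vector_derivative_works by blast
  have N'g: "((\<lambda>v. N' (g v)) has_vector_derivative g' v0 *\<^sub>R N'') (at v0)"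
    using vector_diff_chain_at[of g "g' v0" v0 N'] g[OF \<open>v0 \<in> I\<close>] N''
    by (simp add: o_def has_real_derivative_iff_has_vector_derivative)
  show "((\<lambda>t. w' t *\<^sub>R N (g t) + (w t * g' t) *\<^sub>R N' (g t)) has_vector_derivative w'' *\<^sub>R N (g v0)) (at v0)"
    using w[OF \<open>v0 \<in> I\<close>] w' g' Ng[OF \<open>v0 \<in> I\<close>] N'g \<open>w v0 = 0\<close> \<open>g' v0 = 0\<close>
    by (auto intro!: derivative_eq_intros)
qed

lemma pd_u_eqI:
  assumes "open S" "u \<in> S" "\<And>s. s \<in> S \<Longrightarrow> h (s, v) = k s" "(k has_vector_derivative D) (at u)"
  shows "pd_u h (u, v) = D"
proof -
  have "((\<lambda>s. h (s, v)) has_vector_derivative D) (at u)"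
    using has_vector_derivative_transform_within_open[OF assms(4,1,2)] assms(3) by simp
  then show ?thesis by (simp add: pd_u_def vector_derivative_at)
qed

lemma pd_v_eqI:
  assumes "open S" "v \<in> S" "\<And>t. t \<in> S \<Longrightarrow> h (u, t) = k t" "(k has_vector_derivative D) (at v)"
  shows "pd_v h (u, v) = D"
proof -
  have "((\<lambda>t. h (u, t)) has_vector_derivative D) (at v)"
    using has_vector_derivative_transform_within_open[OF assms(4,1,2)] assms(3) by simp
  then show ?thesis by (simp add: pd_v_def vector_derivative_at)
qed

lemma pd_u_separable:
  "(F1 has_vector_derivative X) (at u) \<Longrightarrow> pd_u (\<lambda>(u, v). F1 u + F2 v) (u, v) = X"
  by (rule pd_u_eqI[OF open_UNIV UNIV_I, where k = "\<lambda>s. F1 s + F2 v"]) (auto intro!: derivative_eq_intros)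

lemma pd_v_separable:
  "(F2 has_vector_derivative Y) (at v) \<Longrightarrow> pd_v (\<lambda>(u, v). F1 u + F2 v) (u, v) = Y"
  by (rule pd_v_eqI[OF open_UNIV UNIV_I, where k = "\<lambda>t. F1 u + F2 t"]) (auto intro!: derivative_eq_intros)

lemma vf_apply_shear:
  "vf_apply (\<lambda>(u, v). (\<phi> v, 1)) h (u, v) = \<phi> v *\<^sub>R pd_u h (u, v) + pd_v h (u, v)"
  by (simp add: vf_apply_def)

lemma vf_apply_separable:
  assumes "(F1 has_vector_derivative X) (at u)" "(F2 has_vector_derivative Y) (at v)"
  shows "vf_apply (\<lambda>(u, v). (\<phi> v, 1)) (\<lambda>(u, v). F1 u + F2 v) (u, v) = \<phi> v *\<^sub>R X + Y"
  using assms by (simp add: vf_apply_shear pd_u_separable pd_v_separable)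

lemma vf_apply2_separable:
  fixes F1 F2 :: "real \<Rightarrow> 'a::real_normed_vector"
  assumes "open I1" "open I2" "u0 \<in> I1" "t \<in> I2"
    and F1: "\<And>u. u \<in> I1 \<Longrightarrow> (F1 has_vector_derivative X u) (at u)"
    and F2: "\<And>v. v \<in> I2 \<Longrightarrow> (F2 has_vector_derivative Y v) (at v)"
    and "(X has_vector_derivative X') (at u0)" "(Y has_vector_derivative Y') (at t)"
    and "(\<phi> has_real_derivative \<phi>') (at t)"
  shows "(vf_apply (\<lambda>(u, v). (\<phi> v, 1)) ^^ 2) (\<lambda>(u, v). F1 u + F2 v) (u0, t)
           = \<phi> t *\<^sub>R \<phi> t *\<^sub>R X' + \<phi>' *\<^sub>R X u0 + Y'"
proof -
  let ?\<eta> = "\<lambda>(u, v). (\<phi> v, 1)" and ?f = "\<lambda>(u, v). F1 u + F2 v"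
  have \<eta>f: "vf_apply ?\<eta> ?f (u, v) = \<phi> v *\<^sub>R X u + Y v" if "u \<in> I1" "v \<in> I2" for u v
    using vf_apply_separable F1 F2 that by blast
  have "pd_u (vf_apply ?\<eta> ?f) (u0, t) = \<phi> t *\<^sub>R X'"
    by (rule pd_u_eqI[OF \<open>open I1\<close> \<open>u0 \<in> I1\<close>, where k = "\<lambda>s. \<phi> t *\<^sub>R X s + Y t"])
      (use \<eta>f \<open>t \<in> I2\<close> assms(7) in \<open>auto intro!: derivative_eq_intros\<close>)
  moreover have "pd_v (vf_apply ?\<eta> ?f) (u0, t) = \<phi>' *\<^sub>R X u0 + Y'"
    by (rule pd_v_eqI[OF \<open>open I2\<close> \<open>t \<in> I2\<close>, where k = "\<lambda>s. \<phi> s *\<^sub>R X u0 + Y s"])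
      (use \<eta>f \<open>u0 \<in> I1\<close> assms(8,9) in \<open>auto intro!: derivative_eq_intros\<close>)
  ultimately show ?thesis
    by (simp add: numeral_2_eq_2 vf_apply_shear)
qed

lemma vf_apply3_separable:
  fixes F1 F2 :: "real \<Rightarrow> 'a::real_normed_vector"
  assumes "open I1" "open I2" "u0 \<in> I1" "v0 \<in> I2"
    and F1: "\<And>u. u \<in> I1 \<Longrightarrow> (F1 has_vector_derivative X u) (at u)"
    and F2: "\<And>v. v \<in> I2 \<Longrightarrow> (F2 has_vector_derivative Y v) (at v)"
    and X: "X differentiable (at u0)"
    and Y: "\<And>t. t \<in> I2 \<Longrightarrow> (Y has_vector_derivative Y' t) (at t)"
    and Y': "(Y' has_vector_derivative Y'') (at v0)"
    and \<phi>: "\<And>t. (\<phi> has_real_derivative \<phi>' t) (at t)"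
    and \<phi>': "(\<phi>' has_real_derivative \<phi>'') (at v0)"
    and "\<phi> v0 = 0"
  shows "(vf_apply (\<lambda>(u, v). (\<phi> v, 1)) ^^ 3) (\<lambda>(u, v). F1 u + F2 v) (u0, v0) = \<phi>'' *\<^sub>R X u0 + Y''"
proof -
  let ?\<eta> = "\<lambda>(u, v). (\<phi> v, 1)" and ?f = "\<lambda>(u, v). F1 u + F2 v"
  obtain X' where X': "(X has_vector_derivative X') (at u0)"
    using X vector_derivative_works by blast
  have \<eta>2f: "(vf_apply ?\<eta> ^^ 2) ?f (u0, t) = \<phi> t *\<^sub>R \<phi> t *\<^sub>R X' + \<phi>' t *\<^sub>R X u0 + Y' t"
    if "t \<in> I2" for t
    using vf_apply2_separable[OF assms(1-3) that F1 F2 X' Y[OF that] \<phi>] .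
  have "pd_v ((vf_apply ?\<eta> ^^ 2) ?f) (u0, v0) = \<phi>'' *\<^sub>R X u0 + Y''"
    by (rule pd_v_eqI[OF \<open>open I2\<close> \<open>v0 \<in> I2\<close>,
          where k = "\<lambda>t. \<phi> t *\<^sub>R \<phi> t *\<^sub>R X' + \<phi>' t *\<^sub>R X u0 + Y' t"])
      (use \<eta>2f \<phi> \<phi>' Y' \<open>\<phi> v0 = 0\<close> in \<open>auto intro!: derivative_eq_intros\<close>)
  moreover have "(vf_apply ?\<eta> ^^ 3) ?f = vf_apply ?\<eta> ((vf_apply ?\<eta> ^^ 2) ?f)"
    by (simp add: numeral_3_eq_3 numeral_2_eq_2)
  ultimately show ?thesis
    using \<open>\<phi> v0 = 0\<close> by (simp add: vf_apply_shear)
qed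

lemma vf_apply_quadratic_shear_separable:
  fixes F1 F2 :: "real \<Rightarrow> 'a::real_normed_vector" and a b :: real
  assumes "open I1" "open I2" "u0 \<in> I1" "0 \<in> I2"
    and F1: "\<And>u. u \<in> I1 \<Longrightarrow> (F1 has_vector_derivative X u) (at u)"
    and F2: "\<And>v. v \<in> I2 \<Longrightarrow> (F2 has_vector_derivative Y v) (at v)"
    and X: "X differentiable (at u0)"
    and Y: "\<And>t. t \<in> I2 \<Longrightarrow> (Y has_vector_derivative Y' t) (at t)"
    and Y': "(Y' has_vector_derivative Y'') (at 0)"
  defines "\<eta> \<equiv> \<lambda>(u, v). (a * v + b * v\<^sup>2, 1)" and "f \<equiv> \<lambda>(u, v). F1 u + F2 v"
  shows "\<And>u. u \<in> I1 \<Longrightarrow> vf_apply \<eta> f (u, 0) = Y 0"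
    and "(vf_apply \<eta> ^^ 2) f (u0, 0) = a *\<^sub>R X u0 + Y' 0"
    and "(vf_apply \<eta> ^^ 3) f (u0, 0) = (2 * b) *\<^sub>R X u0 + Y''"
proof -
  define \<phi> where "\<phi> v = a * v + b * v\<^sup>2" for v
  have \<eta>: "\<eta> = (\<lambda>(u, v). (\<phi> v, 1))"
    by (simp add: \<eta>_def \<phi>_def)
  have \<phi>: "(\<phi> has_real_derivative a + 2 * b * t) (at t)" for t
    unfolding \<phi>_def by (auto intro!: derivative_eq_intros)
  have \<phi>': "((\<lambda>t. a + 2 * b * t) has_real_derivative 2 * b) (at 0)"
    by (auto intro!: derivative_eq_intros)
  obtain X' where X': "(X has_vector_derivative X') (at u0)"
    using X vector_derivative_works by blast
  show "vf_apply \<eta> f (u, 0) = Y 0" if "u \<in> I1" for u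
    using vf_apply_separable[OF F1[OF that] F2[OF \<open>0 \<in> I2\<close>]] by (simp add: \<eta> f_def \<phi>_def)
  show "(vf_apply \<eta> ^^ 2) f (u0, 0) = a *\<^sub>R X u0 + Y' 0"
    using vf_apply2_separable[OF assms(1-4) F1 F2 X' Y \<phi>] \<open>0 \<in> I2\<close> by (simp add: \<eta> f_def \<phi>_def)
  show "(vf_apply \<eta> ^^ 3) f (u0, 0) = (2 * b) *\<^sub>R X u0 + Y''"
    using vf_apply3_separable[OF assms(1-4) F1 F2 X Y Y' \<phi> \<phi>'] by (simp add: \<eta> f_def \<phi>_def)
qed

(* The null vectors of the Weierstrass representation: f_u = (w1/2) null_dir1 g1, f_v = (w2/2) null_dir2 g2. *)
definition null_dir1 :: "real \<Rightarrow> real^3" where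
  "null_dir1 g = vector [- 1 - g\<^sup>2, 1 - g\<^sup>2, 2 * g]"

definition null_dir2 :: "real \<Rightarrow> real^3" where
  "null_dir2 g = vector [1 + g\<^sup>2, 1 - g\<^sup>2, - 2 * g]"

lemma inner_null_dir1_self: "inner (null_dir1 g) (null_dir1 g) = 2 * (1 + g\<^sup>2)\<^sup>2"
  by (simp add: null_dir1_def inner_vec_def sum_3) (simp add: power2_eq_square algebra_simps)

lemma inner_null_dir1_null_dir2: "inner (null_dir1 g) (null_dir2 h) = - 2 * (g + h)\<^sup>2"
  by (simp add: null_dir1_def null_dir2_def inner_vec_def sum_3) (simp add: power2_eq_square algebra_simps)

lemma has_vector_derivative_null_dir1: "(null_dir1 has_vector_derivative vector [- 2 * x, - 2 * x, 2]) (at x)"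
  unfolding null_dir1_def by (rule has_vector_derivative_vector3) (auto intro!: derivative_eq_intros)

lemma has_vector_derivative_null_dir2: "(null_dir2 has_vector_derivative vector [2 * x, - 2 * x, - 2]) (at x)"
  unfolding null_dir2_def by (rule has_vector_derivative_vector3) (auto intro!: derivative_eq_intros)

lemma isCont_null_dir2 [continuous_intros]: "isCont g t \<Longrightarrow> isCont (\<lambda>t. null_dir2 (g t)) t"
  unfolding null_dir2_def by (intro continuous_intros)

lemma null_dir_orthogonal_combination:
  assumes "w \<noteq> 0" "\<alpha> = c / w * ((g + h) / (1 + g\<^sup>2))\<^sup>2"
  shows "inner ((w / 2) *\<^sub>R null_dir1 g) (\<alpha> *\<^sub>R ((w / 2) *\<^sub>R null_dir1 g) + (c / 2) *\<^sub>R null_dir2 h) = 0"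
proof -
  have "1 + g\<^sup>2 > 0"
    by (simp add: add_pos_nonneg)
  then show ?thesis
    using assms by (simp add: inner_add_right inner_null_dir1_self inner_null_dir1_null_dir2 field_simps)
qed

lemma weierstrass_integrand2_derivatives:
  assumes "open I" "v0 \<in> I" "smooth_on I w" "smooth_on I g" "w v0 = 0" "deriv g v0 = 0"
  obtains Y' where
    "\<And>t. t \<in> I \<Longrightarrow> ((\<lambda>v. (w v / 2) *\<^sub>R null_dir2 (g v)) has_vector_derivative Y' t) (at t)"
    "Y' v0 = (deriv w v0 / 2) *\<^sub>R null_dir2 (g v0)"
    "(Y' has_vector_derivative ((deriv ^^ 2) w v0 / 2) *\<^sub>R null_dir2 (g v0)) (at v0)"
proof -
  have w: "(w has_real_derivative deriv w t) (at t)" "(deriv w has_real_derivative (deriv ^^ 2) w t) (at t)"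
    and g: "(g has_real_derivative deriv g t) (at t)" "(deriv g has_real_derivative (deriv ^^ 2) g t) (at t)"
    if "t \<in> I" for t
    using smooth_on_has_real_derivative[OF assms(3) that, of 0] smooth_on_has_real_derivative[OF assms(3) that, of 1]
      smooth_on_has_real_derivative[OF assms(4) that, of 0] smooth_on_has_real_derivative[OF assms(4) that, of 1]
    by (simp_all add: numeral_2_eq_2)
  have N': "(\<lambda>x. vector [2 * x, - 2 * x, - 2] :: real^3) differentiable (at (g v0))"
    by (rule differentiableI_vector, rule has_vector_derivative_vector3) (auto intro!: derivative_eq_intros)
  note Y = scaleR_comp_second_derivative[OF \<open>v0 \<in> I\<close>, of "\<lambda>v. w v / 2" "\<lambda>t. deriv w t / 2",
      OF _ _ g(1) g(2)[OF \<open>v0 \<in> I\<close>] has_vector_derivative_null_dir2 N']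
  show ?thesis
    by (rule that[OF Y(1) _ Y(2)]) (use w \<open>v0 \<in> I\<close> assms(5,6) in \<open>auto intro!: derivative_eq_intros\<close>)
qed

lemma weierstrass_integrand1_differentiable:
  assumes "smooth_on I w" "smooth_on I g" "u \<in> I"
  shows "(\<lambda>u. (w u / 2) *\<^sub>R null_dir1 (g u)) differentiable (at u)"
proof -
  have "(w has_real_derivative deriv w u) (at u)" "(g has_real_derivative deriv g u) (at u)"
    using smooth_on_has_real_derivative[OF assms(1,3), of 0] smooth_on_has_real_derivative[OF assms(2,3), of 0]
    by simp_all
  then show ?thesis
    using vector_diff_chain_at[of g "deriv g u" u null_dir1, OF _ has_vector_derivative_null_dir1]
    by (auto simp: o_def has_real_derivative_iff_has_vector_derivative
        intro!: differentiableI_vector derivative_eq_intros)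
qed

lemma tm_normal_denominator_pos: "0 < (1 - x * y)\<^sup>2 + 2 * (x + y)\<^sup>2" for x y :: real
proof -
  have "(1 - x * y)\<^sup>2 + 2 * (x + y)\<^sup>2 = (1 + x\<^sup>2) * (1 + y\<^sup>2) + (x + y)\<^sup>2"
    by (simp add: power2_eq_square algebra_simps)
  moreover have "0 < (1 + x\<^sup>2) * (1 + y\<^sup>2) + (x + y)\<^sup>2"
    by (intro add_pos_nonneg mult_pos_pos) (simp_all add: add_pos_nonneg)
  ultimately show ?thesis
    by simp
qed

lemma isCont_tm_normal_v: "isCont g2 v \<Longrightarrow> isCont (\<lambda>t. tm_normal g1 g2 (u, t)) v"
  unfolding tm_normal_def using tm_normal_denominator_pos
  by (simp, intro continuous_intros) (auto simp: less_le)

lemma deriv_eq_0_if_pd_v_tm_normal_eq_0: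
  assumes g2: "(g2 has_real_derivative g2') (at v)" and n_v: "pd_v (tm_normal g1 g2) (u, v) = 0"
  shows "g2' = 0"
proof -
  define c where "c = g1 u"
  define s where "s t = 1 / sqrt ((1 - c * g2 t)\<^sup>2 + 2 * (c + g2 t)\<^sup>2)" for t
  define V where "V t = (vector [c + g2 t, - c + g2 t, 1 + c * g2 t] :: real^3)" for t
  have "s v > 0"
    using tm_normal_denominator_pos by (simp add: s_def)
  have "\<exists>s'. (s has_real_derivative s') (at v)"
    unfolding s_def using g2 tm_normal_denominator_pos[of c "g2 v"] by (intro exI) (auto intro!: derivative_eq_intros)
  then obtain s' where s': "(s has_real_derivative s') (at v)" ..
  have V: "(V has_vector_derivative vector [g2', g2', c * g2']) (at v)"
    unfolding V_def using g2 by (intro has_vector_derivative_vector3) (auto intro!: derivative_eq_intros)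
  have "pd_v (tm_normal g1 g2) (u, v) = s' *\<^sub>R V v + s v *\<^sub>R vector [g2', g2', c * g2']"
    by (rule pd_v_eqI[OF open_UNIV UNIV_I, where k = "\<lambda>t. s t *\<^sub>R V t"])
      (simp add: tm_normal_def s_def V_def c_def, use s' V in \<open>auto intro!: derivative_eq_intros\<close>)
  then have e: "s' * (c + g2 v) + s v * g2' = 0" "s' * (- c + g2 v) + s v * g2' = 0"
      "s' * (1 + c * g2 v) + s v * (c * g2') = 0"
    using n_v by (auto simp: V_def vec_eq_iff forall_3)
  from e(1,2) have "s' * c = 0"
    by (simp add: algebra_simps)
  with e(3) have "s' = 0"
    by auto
  with e(1) \<open>s v > 0\<close> show "g2' = 0"
    by simp
qed

lemma pd_v_normal_eq_0_if_not_front: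
  assumes "\<not> is_front_at f n p" "pd_u f p \<noteq> 0" "pd_v f p = 0"
  shows "pd_v n p = 0"
proof -
  obtain \<alpha> \<beta> where \<alpha>\<beta>: "\<alpha> *\<^sub>R pd_u f p + \<beta> *\<^sub>R pd_v f p = 0" "\<alpha> *\<^sub>R pd_u n p + \<beta> *\<^sub>R pd_v n p = 0"
      "\<alpha> \<noteq> 0 \<or> \<beta> \<noteq> 0"
    using assms(1) unfolding is_front_at_def by blast
  then have "\<alpha> = 0"
    using assms(2,3) by simp
  with \<alpha>\<beta> show ?thesis
    by simp
qed

lemma nondegenerate_imp_deriv_ne_0:
  assumes "open I" "v0 \<in> I"
    and f_u: "\<And>t. pd_u f (u0, t) = x"
    and f_v: "\<And>s t. t \<in> I \<Longrightarrow> pd_v f (s, t) = w t *\<^sub>R B t"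
    and w: "(w has_real_derivative w') (at v0)" "w v0 = 0"
    and "isCont B v0" "isCont (\<lambda>t. n (u0, t)) v0"
    and nondeg: "(pd_u (\<lambda>p. det3 (pd_u f p) (pd_v f p) (n p)) (u0, v0),
                  pd_v (\<lambda>p. det3 (pd_u f p) (pd_v f p) (n p)) (u0, v0)) \<noteq> (0, 0)"
  shows "w' \<noteq> 0"
proof
  assume "w' = 0"
  let ?lam = "\<lambda>p. det3 (pd_u f p) (pd_v f p) (n p)"
  have "pd_u ?lam (u0, v0) = 0"
    by (rule pd_u_eqI[OF open_UNIV UNIV_I, where k = "\<lambda>_. 0"])
      (simp only: f_v[OF \<open>v0 \<in> I\<close>] w(2) det3_scaleR_middle mult_zero_left, simp)
  moreover have "pd_v ?lam (u0, v0) = 0"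
  proof (rule pd_v_eqI[OF assms(1,2), where k = "\<lambda>t. w t * det3 x (B t) (n (u0, t))"])
    show "?lam (u0, t) = w t * det3 x (B t) (n (u0, t))" if "t \<in> I" for t
      using that by (simp add: f_u f_v det3_scaleR_middle)
    have "isCont (\<lambda>t. det3 x (B t) (n (u0, t))) v0"
      using assms(7,8) by (intro isCont_det3) auto
    then show "((\<lambda>t. w t * det3 x (B t) (n (u0, t))) has_vector_derivative 0) (at v0)"
      using has_real_derivative_mult_vanishing[OF w] \<open>w' = 0\<close>
      by (simp add: has_real_derivative_iff_has_vector_derivative)
  qed
  ultimately show False
    using nondeg by simp
qed

theorem lemma4p5:
  fixes g1 w1 g2 w2 :: "real \<Rightarrow> real"
    and F1 F2 :: "real \<Rightarrow> real^3"
    and f :: "real \<times> real \<Rightarrow> real^3"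
    and I1 I2 :: "real set"
  assumes I1: "open I1" "0 \<in> I1"
    and I2: "open I2" "0 \<in> I2"
    and smooth: "smooth_on I1 g1" "smooth_on I1 w1" "smooth_on I2 g2" "smooth_on I2 w2"
    and F1: "\<And>u. u \<in> I1 \<Longrightarrow> (F1 has_vector_derivative
               ((w1 u / 2) *\<^sub>R vector [- 1 - (g1 u)\<^sup>2, 1 - (g1 u)\<^sup>2, 2 * g1 u])) (at u)"
    and F2: "\<And>v. v \<in> I2 \<Longrightarrow> (F2 has_vector_derivative
               ((w2 v / 2) *\<^sub>R vector [1 + (g2 v)\<^sup>2, 1 - (g2 v)\<^sup>2, - 2 * g2 v])) (at v)"
    and f_def: "f = (\<lambda>(u, v). F1 u + F2 v)"
    and nondeg: "(\<lambda>p. det3 (pd_u f p) (pd_v f p) (tm_normal g1 g2 p)) = lam"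
                "lam (0, 0) = 0"
                "(pd_u lam (0, 0), pd_v lam (0, 0)) \<noteq> (0, 0)"
    and rank1: "dim (span {pd_u f (0, 0), pd_v f (0, 0)}) = 1"
    and w2_zero: "w2 0 = 0"
    and not_front: "\<not> is_front_at f (tm_normal g1 g2) (0, 0)"
    and a_def: "a = deriv w2 0 / w1 0 * ((g1 0 + g2 0) / (1 + (g1 0)\<^sup>2))\<^sup>2"
    and b_def: "b = (deriv ^^ 2) w2 0 / (2 * w1 0) * ((g1 0 + g2 0) / (1 + (g1 0)\<^sup>2))\<^sup>2"
    and eta_def: "\<eta> = (\<lambda>(u::real, v::real). (a * v + b * v\<^sup>2, 1::real))"
    and xi_def: "\<xi> = (\<lambda>(u::real, v::real). (1::real, 0::real))"
    and C_def: "C = (deriv ^^ 2) w2 0 / deriv w2 0"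
  shows "(\<forall>u\<in>I1. vf_apply \<eta> f (u, 0) = 0)
    \<and> inner (vf_apply \<xi> f (0, 0)) ((vf_apply \<eta> ^^ 2) f (0, 0)) = 0
    \<and> inner (vf_apply \<xi> f (0, 0)) ((vf_apply \<eta> ^^ 3) f (0, 0)) = 0
    \<and> (vf_apply \<eta> ^^ 3) f (0, 0) = C *\<^sub>R (vf_apply \<eta> ^^ 2) f (0, 0)"
proof -
  define X where "X u = (w1 u / 2) *\<^sub>R null_dir1 (g1 u)" for u
  define Y where "Y v = (w2 v / 2) *\<^sub>R null_dir2 (g2 v)" for v
  have F1': "(F1 has_vector_derivative X u) (at u)" if "u \<in> I1" for u
    using F1[OF that] by (simp add: X_def null_dir1_def)
  have F2': "(F2 has_vector_derivative Y v) (at v)" if "v \<in> I2" for v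
    using F2[OF that] by (simp add: Y_def null_dir2_def)
  have f_u: "pd_u f (u, v) = X u" if "u \<in> I1" for u v
    unfolding f_def using F1'[OF that] by (rule pd_u_separable)
  have f_v: "pd_v f (u, v) = Y v" if "v \<in> I2" for u v
    unfolding f_def using F2'[OF that] by (rule pd_v_separable)
  have "Y 0 = 0"
    by (simp add: Y_def w2_zero)
  have "X 0 \<noteq> 0"
    using rank1 f_u[OF I1(2)] f_v[OF I2(2)] \<open>Y 0 = 0\<close> by auto
  then have "w1 0 \<noteq> 0"
    by (auto simp: X_def)
  have dg2: "(g2 has_real_derivative deriv g2 0) (at 0)"
    and dw2: "(w2 has_real_derivative deriv w2 0) (at 0)"
    using smooth_on_has_real_derivative[OF smooth(3) I2(2), of 0]
      smooth_on_has_real_derivative[OF smooth(4) I2(2), of 0] by simp_all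
  have "deriv g2 0 = 0"
    using deriv_eq_0_if_pd_v_tm_normal_eq_0[OF dg2] pd_v_normal_eq_0_if_not_front[OF not_front]
      f_u[OF I1(2)] f_v[OF I2(2)] \<open>X 0 \<noteq> 0\<close> \<open>Y 0 = 0\<close> by simp
  have "deriv w2 0 \<noteq> 0"
  proof (rule nondegenerate_imp_deriv_ne_0[OF I2 _ _ dw2 w2_zero])
    show "pd_u f (0, t) = X 0" for t
      using f_u[OF I1(2)] .
    show "pd_v f (s, t) = w2 t *\<^sub>R ((1 / 2) *\<^sub>R null_dir2 (g2 t))" if "t \<in> I2" for s t
      using f_v[OF that] by (simp add: Y_def)
    show "isCont (\<lambda>t. (1 / 2) *\<^sub>R null_dir2 (g2 t)) 0" "isCont (\<lambda>t. tm_normal g1 g2 (0, t)) 0"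
      using DERIV_isCont[OF dg2] by (auto intro: continuous_intros isCont_tm_normal_v)
  qed (use nondeg in simp)
  obtain Y' where Y': "\<And>t. t \<in> I2 \<Longrightarrow> (Y has_vector_derivative Y' t) (at t)"
      "Y' 0 = (deriv w2 0 / 2) *\<^sub>R null_dir2 (g2 0)"
      "(Y' has_vector_derivative ((deriv ^^ 2) w2 0 / 2) *\<^sub>R null_dir2 (g2 0)) (at 0)"
    using weierstrass_integrand2_derivatives[OF I2 smooth(4,3) w2_zero \<open>deriv g2 0 = 0\<close>]
    unfolding Y_def by blast
  have "X differentiable (at 0)"
    unfolding X_def using smooth(2,1) I1(2) by (rule weierstrass_integrand1_differentiable)
  then have \<eta>f: "\<And>u. u \<in> I1 \<Longrightarrow> vf_apply \<eta> f (u, 0) = Y 0"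
      "(vf_apply \<eta> ^^ 2) f (0, 0) = a *\<^sub>R X 0 + Y' 0"
      "(vf_apply \<eta> ^^ 3) f (0, 0) = (2 * b) *\<^sub>R X 0 + ((deriv ^^ 2) w2 0 / 2) *\<^sub>R null_dir2 (g2 0)"
    using vf_apply_quadratic_shear_separable[OF I1(1) I2(1) I1(2) I2(2) F1' F2' _ Y'(1,3)]
    unfolding eta_def f_def by blast+
  have "\<forall>u\<in>I1. vf_apply \<eta> f (u, 0) = 0"
    using \<eta>f(1) \<open>Y 0 = 0\<close> by simp
  moreover have "vf_apply \<xi> f (0, 0) = X 0"
    using f_u[OF I1(2)] by (simp add: vf_apply_def xi_def)
  moreover have "inner (X 0) ((vf_apply \<eta> ^^ 2) f (0, 0)) = 0"
    unfolding \<eta>f(2) Y'(2) X_def using \<open>w1 0 \<noteq> 0\<close>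
    by (rule null_dir_orthogonal_combination) (simp add: a_def)
  moreover have "inner (X 0) ((vf_apply \<eta> ^^ 3) f (0, 0)) = 0"
    unfolding \<eta>f(3) X_def using \<open>w1 0 \<noteq> 0\<close>
    by (rule null_dir_orthogonal_combination) (simp add: b_def)
  moreover have "(vf_apply \<eta> ^^ 3) f (0, 0) = C *\<^sub>R (vf_apply \<eta> ^^ 2) f (0, 0)"
    unfolding \<eta>f(2,3) Y'(2) using \<open>deriv w2 0 \<noteq> 0\<close> by (simp add: scaleR_add_right a_def b_def C_def)
  ultimately show ?thesis
    by simp
qed

end
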